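(* Let $G$ be a finite group. The poset $\widetilde\Pi(G)$ is isomorphic to $C_2$ if and only if, for some prime $p$, either $G$ is a cyclic group of order $p$, or $G$ is an elementary abelian $p$-group, or $G$ has a subgroup isomorphic to $\mathrm{Heis}(\mathbb{Z}_p)$ and $\exp(G)=p$.
   Context: For a finite group $G$ and a subgroup $H\le G$, let $\pi_e(H)=\{o(x)\mid x\in H\}$. Let $\mathcal{L}(G)$ be the set of subgroups of $G$; define $H_1\equiv H_2$ iff $\pi_e(H_1)=\pi_e(H_2)$, with class $[H]$. The poset $\widetilde\Pi(G)$ is $\mathcal{L}(G)/\!\equiv$ ordered by $[H_1]\lesssim[H_2]$ iff $\pi_e(H_1)\subseteq\pi_e(H_2)$. $C_2$ denotes the chain with two elements. $\exp(G)$ is the exponent of $G$, the least positive integer $m$ with $g^m=e$ for all $g\in G$. For an odd prime $p$, $\mathrm{Heis}(\mathbb{Z}_p)$ denotes the group of upper unitriangular $3\times 3$ matrices over $\mathbb{Z}_p$ (the unique, up to isomorphism, nonabelian group of order $p^3$ and exponent $p$). *)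

theory Defs
  imports "HOL-Algebra.Algebra"
begin

(* pi_e(H) = set of element orders of elements of H (orders computed in G,
   which coincide with orders computed in the subgroup H) *)
definition pi_e :: "('a, 'b) monoid_scheme \<Rightarrow> 'a set \<Rightarrow> nat set" where
  "pi_e G H = {group.ord G x | x. x \<in> H}"

definition subgroups :: "('a, 'b) monoid_scheme \<Rightarrow> 'a set set" where
  "subgroups G = {H. subgroup H G}"

definition pi_equiv :: "('a, 'b) monoid_scheme \<Rightarrow> 'a set \<Rightarrow> 'a set \<Rightarrow> bool" where
  "pi_equiv G K1 K2 \<longleftrightarrow> pi_e G K1 = pi_e G K2"

definition pi_class :: "('a, 'b) monoid_scheme \<Rightarrow> 'a set \<Rightarrow> 'a set set" where
  "pi_class G H = {K \<in> subgroups G. pi_equiv G K H}"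

definition PiTilde :: "('a, 'b) monoid_scheme \<Rightarrow> 'a set set set" where
  "PiTilde G = pi_class G ` subgroups G"

definition PiTilde_le :: "('a, 'b) monoid_scheme \<Rightarrow> 'a set set \<Rightarrow> 'a set set \<Rightarrow> bool" where
  "PiTilde_le G A B \<longleftrightarrow>
     (\<exists>K1 K2. K1 \<in> subgroups G \<and> K2 \<in> subgroups G \<and> A = pi_class G K1 \<and> B = pi_class G K2
             \<and> pi_e G K1 \<subseteq> pi_e G K2)"

(* poset isomorphism of (PiTilde G, PiTilde_le G) with the two-element chain C_2,
   modelled as bool with False < True *)
definition PiTilde_iso_C2 :: "('a, 'b) monoid_scheme \<Rightarrow> bool" where
  "PiTilde_iso_C2 G \<longleftrightarrow>
     (\<exists>f :: 'a set set \<Rightarrow> bool. bij_betw f (PiTilde G) (UNIV :: bool set) \<and>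
        (\<forall>A\<in>PiTilde G. \<forall>B\<in>PiTilde G. PiTilde_le G A B \<longleftrightarrow> f A \<le> f B))"

definition group_exponent :: "('a, 'b) monoid_scheme \<Rightarrow> nat" where
  "group_exponent G = (LEAST m. m > 0 \<and> (\<forall>g\<in>carrier G. g [^]\<^bsub>G\<^esub> m = \<one>\<^bsub>G\<^esub>))"

definition elementary_abelian :: "nat \<Rightarrow> ('a, 'b) monoid_scheme \<Rightarrow> bool" where
  "elementary_abelian p G \<longleftrightarrow> comm_group G \<and>
     (\<exists>n\<ge>1. order G = p ^ n) \<and> (\<forall>g\<in>carrier G. g [^]\<^bsub>G\<^esub> p = \<one>\<^bsub>G\<^esub>)"

(* Heis(Z_p): upper unitriangular 3x3 matrices [[1,a,c],[0,1,b],[0,0,1]] over Z_p,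
   encoded by the triple (a,b,c) with entries in {0..<p}; matrix multiplication gives
   (a,b,c)(a',b',c') = (a+a', b+b', c+c'+a*b') mod p *)
definition Heis :: "nat \<Rightarrow> (nat \<times> nat \<times> nat) monoid" where
  "Heis p = \<lparr> carrier = {(a, b, c). a < p \<and> b < p \<and> c < p},
             monoid.mult = (\<lambda>(a, b, c) (a', b', c').
                       ((a + a') mod p, (b + b') mod p, (c + c' + a * b') mod p)),
             monoid.one = (0, 0, 0) \<rparr>"

end

theory Submission
  imports Defs
begin

(* The classes of Pi~(G) are the possible spectra pi_e(H), ordered by inclusion, with
   bottom element {1}. Hence Pi~(G) is a two-element chain iff there are exactly two spectra, and
   comparing the spectrum of a cyclic subgroup <x> with that of G shows that this happens iff all
   nontrivial elements have the same order, necessarily a prime p, i.e. iff exp(G) = p.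
   It remains to see that exp(G) = p is equivalent to the stated alternatives. Abelian groups of
   exponent p are elementary abelian. A nonabelian group G of exponent p is a p-group, so G acting
   by conjugation on G/Z(G) has a fixed coset Z(G) a other than Z(G); for such a there is b with
   ab = bac, where c is central and of order p, and (i, j, k) |-> b^j a^i c^k embeds Heis(Z_p)
   into G. *)

section \<open>Exponent of a group\<close>

lemma prime_power_if_prime_divisors_eq:
  fixes n p :: nat
  assumes "n \<noteq> 0" "Factorial_Ring.prime p" "\<And>q. Factorial_Ring.prime q \<Longrightarrow> q dvd n \<Longrightarrow> q = p"
  shows "\<exists>k. n = p ^ k"
proof -
  have "\<not> is_unit p" using assms(2) not_prime_unit by blast
  then obtain m where m: "n = p ^ multiplicity p n * m" "\<not> p dvd m"
    using multiplicity_decompose'[OF assms(1)] by blast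
  have "m = 1"
  proof (rule ccontr)
    assume "m \<noteq> 1"
    then obtain q where "Factorial_Ring.prime q" "q dvd m" using prime_factor_nat by blast
    then show False using assms(3) m by (metis dvd_mult)
  qed
  then show ?thesis using m by auto
qed

context group begin

lemma ord_eq_prime:
  assumes "x \<in> carrier G" "x \<noteq> \<one>" "x [^] p = \<one>" "Factorial_Ring.prime p"
  shows "ord x = p"
proof -
  have "ord x dvd p" "ord x \<noteq> 1" using assms pow_eq_id ord_eq_1 by auto
  then show ?thesis using assms(4) prime_nat_iff by blast
qed

lemma pow_mod_eq_pow:
  assumes "x \<in> carrier G" "x [^] p = \<one>"
  shows "x [^] (n mod p) = x [^] (n::nat)"
proof -
  have "x [^] n = (x [^] p) [^] (n div p) \<otimes> x [^] (n mod p)"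
    using assms(1) by (simp add: nat_pow_pow nat_pow_mult)
  also have "\<dots> = x [^] (n mod p)" using assms by simp
  finally show ?thesis ..
qed

lemma eq_zero_if_pow_eq_one_less_ord:
  assumes "x \<in> carrier G" "x [^] n = \<one>" "n < ord x"
  shows "n = 0"
  using assms pow_eq_id by (metis dvd_imp_le gr0I leD)

lemma group_exponent_eq_prime_iff:
  assumes "finite (carrier G)" "Factorial_Ring.prime p"
  shows "group_exponent G = p \<longleftrightarrow> carrier G \<noteq> {\<one>} \<and> (\<forall>x\<in>carrier G. x [^] p = \<one>)"
proof
  let ?P = "\<lambda>m::nat. 0 < m \<and> (\<forall>x\<in>carrier G. x [^] m = \<one>)"
  assume exp: "group_exponent G = p"
  have "?P (order G)" using pow_order_eq_1 order_gt_0_iff_finite assms(1) by blast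
  then have "?P (group_exponent G)" unfolding group_exponent_def by (rule LeastI)
  then have "?P p" using exp by simp
  moreover have "carrier G \<noteq> {\<one>}"
  proof
    assume "carrier G = {\<one>}"
    then have "group_exponent G \<le> 1" unfolding group_exponent_def by (intro Least_le) simp
    then show False using exp prime_gt_1_nat[OF assms(2)] by simp
  qed
  ultimately show "carrier G \<noteq> {\<one>} \<and> (\<forall>x\<in>carrier G. x [^] p = \<one>)" by blast
next
  assume "carrier G \<noteq> {\<one>} \<and> (\<forall>x\<in>carrier G. x [^] p = \<one>)"
  then obtain x where x: "x \<in> carrier G" "x \<noteq> \<one>" and pow_p: "\<forall>x\<in>carrier G. x [^] p = \<one>"
    using one_closed by blast
  show "group_exponent G = p"
    unfolding group_exponent_def
  proof (rule Least_equality)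
    show "0 < p \<and> (\<forall>x\<in>carrier G. x [^] p = \<one>)" using pow_p prime_gt_0_nat[OF assms(2)] by blast
    fix m :: nat assume m: "0 < m \<and> (\<forall>x\<in>carrier G. x [^] m = \<one>)"
    have "ord x = p" using ord_eq_prime x pow_p assms(2) by blast
    then have "p dvd m" using m x pow_eq_id by metis
    then show "p \<le> m" using m by (simp add: dvd_imp_le)
  qed
qed

lemma exists_nontrivial_prime_power_ord:
  assumes "finite (carrier G)" "Factorial_Ring.prime q" "q dvd order G"
  shows "\<exists>y\<in>carrier G. y \<noteq> \<one> \<and> (\<exists>i. ord y = q ^ i)"
proof -
  obtain m where m: "order G = q ^ multiplicity q (order G) * m"
    using multiplicity_dvd[of q "order G"] by (auto elim: dvdE)
  obtain H where H: "subgroup H G" "card H = q ^ multiplicity q (order G)"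
    using sylow_thm[OF assms(2) is_group m assms(1)] by blast
  have "order G \<noteq> 0" using assms(1) order_gt_0_iff_finite by simp
  moreover have "\<not> is_unit q" using assms(2) not_prime_unit by blast
  ultimately have "multiplicity q (order G) \<noteq> 0"
    using multiplicity_gt_zero_iff assms(3) by blast
  then have "card H > 1" using H(2) prime_gt_1_nat[OF assms(2)] by (metis neq0_conv one_less_power)
  then have "\<not> H \<subseteq> {\<one>}" using card_mono[of "{\<one>}" H] by auto
  then obtain y where y: "y \<in> H" "y \<noteq> \<one>" by blast
  have y_carrier: "y \<in> carrier G" using subgroup.mem_carrier[OF H(1) y(1)] .
  have "y [^]\<^bsub>G\<lparr>carrier := H\<rparr>\<^esub> order (G\<lparr>carrier := H\<rparr>) = \<one>\<^bsub>G\<lparr>carrier := H\<rparr>\<^esub>"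
    using group.pow_order_eq_1[OF subgroup_imp_group[OF H(1)]] y(1) by simp
  then have "y [^] card H = \<one>" by (simp add: order_def flip: nat_pow_consistent)
  then have "ord y dvd q ^ multiplicity q (order G)" using pow_eq_id[OF y_carrier] H(2) by simp
  then show ?thesis using y(2) y_carrier divides_primepow_nat[OF assms(2)] by blast
qed

lemma order_eq_prime_power:
  assumes "finite (carrier G)" "Factorial_Ring.prime p" "\<forall>x\<in>carrier G. x [^] p = \<one>"
  shows "\<exists>n. order G = p ^ n"
proof (rule prime_power_if_prime_divisors_eq)
  show "order G \<noteq> 0" using assms(1) order_gt_0_iff_finite by simp
  fix q assume q: "Factorial_Ring.prime q" "q dvd order G"
  then obtain y i where y: "y \<in> carrier G" "y \<noteq> \<one>" "ord y = q ^ i"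
    using exists_nontrivial_prime_power_ord[OF assms(1)] by blast
  then have "p = q ^ i" using ord_eq_prime assms(2,3) by metis
  then have "p dvd q" using prime_dvd_power_nat[OF assms(2), of q i] by simp
  then show "q = p" using primes_dvd_imp_eq[OF assms(2) q(1)] by simp
qed (rule assms(2))

lemma group_exponent_prime_order:
  assumes "Factorial_Ring.prime (order G)"
  shows "group_exponent G = order G"
proof -
  have fin: "finite (carrier G)" using prime_gt_0_nat[OF assms] order_gt_0_iff_finite by simp
  have "order G \<noteq> 1" using assms by auto
  then have "carrier G \<noteq> {\<one>}" using order_one_triv_iff by simp
  moreover have "\<forall>x\<in>carrier G. x [^] order G = \<one>" using pow_order_eq_1 by blast
  ultimately show ?thesis using group_exponent_eq_prime_iff[OF fin assms] by blast
qed

end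

lemma (in comm_group) elementary_abelian_iff_group_exponent:
  assumes "finite (carrier G)" "Factorial_Ring.prime p"
  shows "elementary_abelian p G \<longleftrightarrow> group_exponent G = p"
proof
  assume "elementary_abelian p G"
  then obtain n where "n \<ge> 1" "order G = p ^ n" and pow_p: "\<forall>x\<in>carrier G. x [^] p = \<one>"
    by (auto simp: elementary_abelian_def)
  then have "order G \<noteq> 1" using prime_gt_1_nat[OF assms(2)] by simp
  then have "carrier G \<noteq> {\<one>}" using order_one_triv_iff by simp
  then show "group_exponent G = p" using group_exponent_eq_prime_iff[OF assms] pow_p by blast
next
  assume "group_exponent G = p"
  then have nontrivial: "carrier G \<noteq> {\<one>}" and pow_p: "\<forall>x\<in>carrier G. x [^] p = \<one>"
    using group_exponent_eq_prime_iff[OF assms] by auto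
  obtain n where n: "order G = p ^ n" using order_eq_prime_power[OF assms pow_p] by blast
  have "n \<ge> 1" using n nontrivial order_one_triv_iff by (cases n) auto
  then show "elementary_abelian p G"
    unfolding elementary_abelian_def using comm_group_axioms n pow_p by blast
qed

section \<open>Central commutators in nonabelian p-groups\<close>

lemma (in group_action) prime_dvd_card_orbit:
  assumes "Factorial_Ring.prime p" "order G = p ^ n"
    and "x \<in> E" "g \<in> carrier G" "\<phi> g x \<noteq> x"
  shows "p dvd card (orbit G \<phi> x)"
proof -
  have "card (orbit G \<phi> x) dvd p ^ n"
    using orbit_stabilizer_theorem[OF assms(3)] assms(2) by (metis dvd_triv_left)
  then obtain i where i: "card (orbit G \<phi> x) = p ^ i"
    using divides_primepow_nat[OF assms(1)] by blast
  have "\<phi> g x \<in> orbit G \<phi> x" using assms(4) by (auto simp: orbit_def)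
  then have "orbit G \<phi> x \<noteq> {x}" using assms(5) by blast
  then have "i \<noteq> 0" using i orbit_refl[OF assms(3)] by (auto simp: card_Suc_eq)
  then show ?thesis using i by simp
qed

lemma (in group_action) card_mod_prime_eq_card_fixed_points:
  assumes "Factorial_Ring.prime p" "order G = p ^ n"
    and "F \<subseteq> E" "finite F" "\<And>g x. g \<in> carrier G \<Longrightarrow> x \<in> F \<Longrightarrow> \<phi> g x \<in> F"
  shows "card F mod p = card {x \<in> F. \<forall>g\<in>carrier G. \<phi> g x = x} mod p"
proof -
  define Fix where "Fix = {x \<in> F. \<forall>g\<in>carrier G. \<phi> g x = x}"
  have orbit_fixed: "orbit G \<phi> x = {x}" if "x \<in> Fix" for x
    using that orbit_refl[of x] assms(3) by (auto simp: orbit_def Fix_def)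
  have orbit_nonfixed: "orbit G \<phi> x \<subseteq> F - Fix" if x: "x \<in> F - Fix" for x
  proof
    fix y assume y: "y \<in> orbit G \<phi> x"
    then have "y \<in> F" using x assms(5) by (auto simp: orbit_def)
    moreover have "y \<notin> Fix"
    proof
      assume "y \<in> Fix"
      then have "x \<in> {y}" using orbit_sym[of x y] orbit_fixed x y assms(3) \<open>y \<in> F\<close> by auto
      then show False using x \<open>y \<in> Fix\<close> by simp
    qed
    ultimately show "y \<in> F - Fix" by simp
  qed
  have p_dvd_orbit: "p dvd card (orbit G \<phi> x)" if "x \<in> F - Fix" for x
    using that prime_dvd_card_orbit[OF assms(1,2)] assms(3) by (auto simp: Fix_def)
  have "p dvd card (\<Union> (orbit G \<phi> ` (F - Fix)))"
  proof (rule dvd_partition)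
    have "\<Union> (orbit G \<phi> ` (F - Fix)) \<subseteq> F" using orbit_nonfixed by blast
    then show "finite (\<Union> (orbit G \<phi> ` (F - Fix)))" using assms(4) by (rule finite_subset)
    show "\<forall>c\<in>orbit G \<phi> ` (F - Fix). p dvd card c" using p_dvd_orbit by blast
    show "\<forall>c1\<in>orbit G \<phi> ` (F - Fix). \<forall>c2\<in>orbit G \<phi> ` (F - Fix). c1 \<noteq> c2 \<longrightarrow> c1 \<inter> c2 = {}"
      using disjoint_union assms(3) by (auto simp: orbits_def)
  qed
  also have "\<Union> (orbit G \<phi> ` (F - Fix)) = F - Fix"
    using orbit_nonfixed orbit_refl assms(3) by blast
  finally have "p dvd card (F - Fix)" .
  moreover have "card F = card Fix + card (F - Fix)"
    using assms(4) by (simp add: Fix_def card_Diff_subset card_mono)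
  ultimately show ?thesis unfolding Fix_def[symmetric] by (auto elim!: dvdE)
qed

context group begin

definition center :: "'a set" where
  "center = {z \<in> carrier G. \<forall>g\<in>carrier G. z \<otimes> g = g \<otimes> z}"

lemma center_subgroup: "subgroup center G"
proof (rule subgroupI)
  show "center \<subseteq> carrier G" by (auto simp: center_def)
  have "\<one> \<in> center" by (simp add: center_def)
  then show "center \<noteq> {}" by blast
next
  fix a assume a: "a \<in> center"
  then have ac: "a \<in> carrier G" and ag: "\<And>g. g \<in> carrier G \<Longrightarrow> a \<otimes> g = g \<otimes> a"
    by (auto simp: center_def)
  have "inv a \<otimes> g = g \<otimes> inv a" if g: "g \<in> carrier G" for g
  proof -
    have "inv a \<otimes> g = inv a \<otimes> (g \<otimes> a) \<otimes> inv a" using ac g by (simp add: m_assoc)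
    also have "\<dots> = inv a \<otimes> (a \<otimes> g) \<otimes> inv a" by (simp add: ag g)
    also have "\<dots> = g \<otimes> inv a" using ac g by (simp add: m_assoc[symmetric])
    finally show ?thesis .
  qed
  then show "inv a \<in> center" using ac by (simp add: center_def)
next
  fix a b assume "a \<in> center" "b \<in> center"
  then have ac: "a \<in> carrier G" "\<And>g. g \<in> carrier G \<Longrightarrow> a \<otimes> g = g \<otimes> a"
    and bc: "b \<in> carrier G" "\<And>g. g \<in> carrier G \<Longrightarrow> b \<otimes> g = g \<otimes> b"
    by (auto simp: center_def)
  have "a \<otimes> b \<otimes> g = g \<otimes> (a \<otimes> b)" if g: "g \<in> carrier G" for g
  proof -
    have "a \<otimes> b \<otimes> g = a \<otimes> g \<otimes> b" using ac(1) bc g by (simp add: m_assoc)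
    also have "\<dots> = g \<otimes> (a \<otimes> b)" using ac(1) ac(2)[OF g] bc(1) g by (simp add: m_assoc)
    finally show ?thesis .
  qed
  then show "a \<otimes> b \<in> center" using ac(1) bc(1) by (simp add: center_def)
qed

lemma center_closed: "z \<in> center \<Longrightarrow> z \<in> carrier G"
  by (simp add: center_def)

lemma center_commute: "z \<in> center \<Longrightarrow> g \<in> carrier G \<Longrightarrow> z \<otimes> g = g \<otimes> z"
  by (simp add: center_def)

lemma pow_mem_center: "c \<in> center \<Longrightarrow> c [^] (k::nat) \<in> center"
  by (induction k) (auto intro: subgroup.m_closed[OF center_subgroup] subgroup.one_closed[OF center_subgroup])

lemma conj_center_coset:
  assumes "a \<in> carrier G" "g \<in> carrier G"
  shows "g <# (center #> a) #> inv g = center #> (g \<otimes> a \<otimes> inv g)"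
proof -
  have "g \<otimes> (z \<otimes> a) \<otimes> inv g = z \<otimes> (g \<otimes> a \<otimes> inv g)" if z: "z \<in> center" for z
  proof -
    have "g \<otimes> (z \<otimes> a) \<otimes> inv g = (g \<otimes> z) \<otimes> a \<otimes> inv g"
      using center_closed[OF z] assms by (simp add: m_assoc)
    also have "\<dots> = z \<otimes> (g \<otimes> a \<otimes> inv g)"
      using center_closed[OF z] center_commute[OF z assms(2), symmetric] assms by (simp add: m_assoc)
    finally show ?thesis .
  qed
  then show ?thesis unfolding r_coset_def l_coset_def by auto
qed

lemma conj_rcosets_center:
  assumes "g \<in> carrier G" "S \<in> rcosets center"
  shows "g <# S #> inv g \<in> rcosets center"
proof -
  obtain a where a: "a \<in> carrier G" "S = center #> a" using assms(2) by (auto simp: RCOSETS_def)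
  then have "g <# S #> inv g = center #> (g \<otimes> a \<otimes> inv g)" using assms(1) conj_center_coset by simp
  moreover have "g \<otimes> a \<otimes> inv g \<in> carrier G" using a assms(1) by simp
  ultimately show ?thesis unfolding RCOSETS_def by blast
qed

lemma prime_dvd_card_rcosets_center:
  assumes "Factorial_Ring.prime p" "order G = p ^ n" "\<not> comm_group G"
  shows "p dvd card (rcosets center)"
proof -
  have fin: "finite (carrier G)"
    using assms(1,2) order_gt_0_iff_finite by (simp add: prime_gt_0_nat)
  have "center \<noteq> carrier G"
    using assms(3) group_comm_groupI by (auto simp: center_def)
  then have "card center < order G"
    using fin center_closed by (simp add: order_def psubset_card_mono psubsetI subsetI)
  then have "card (rcosets center) \<noteq> 1" using lagrange[OF center_subgroup] by auto
  moreover have "card (rcosets center) dvd p ^ n"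
    using lagrange[OF center_subgroup] assms(2) by (metis dvd_triv_left)
  ultimately show ?thesis using divides_primepow_nat[OF assms(1)] by (metis dvd_power neq0_conv power_0)
qed

lemma exists_noncentral_central_modulo_center:
  assumes "Factorial_Ring.prime p" "order G = p ^ n" "\<not> comm_group G"
  shows "\<exists>a\<in>carrier G. a \<notin> center \<and> (\<forall>g\<in>carrier G. g \<otimes> a \<otimes> inv g \<in> center #> a)"
proof -
  let ?E = "{H. H \<subseteq> carrier G}"
  let ?\<phi> = "\<lambda>g. \<lambda>H \<in> ?E. g <# H #> inv g"
  interpret conj: group_action G ?E ?\<phi> by (rule action_by_conjugation_on_power_set)
  have fin: "finite (carrier G)"
    using assms(1,2) order_gt_0_iff_finite by (simp add: prime_gt_0_nat)
  have Z: "subgroup center G" "center \<subseteq> carrier G"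
    using center_subgroup center_closed by auto
  have \<phi>_coset: "?\<phi> g (center #> a) = center #> (g \<otimes> a \<otimes> inv g)" if "a \<in> carrier G" "g \<in> carrier G" for a g
    using that conj_center_coset r_coset_subset_G[OF Z(2)] by simp
  define Fix where "Fix = {S \<in> rcosets center. \<forall>g\<in>carrier G. ?\<phi> g S = S}"
  have "card (rcosets center) mod p = card Fix mod p"
    unfolding Fix_def
  proof (rule conj.card_mod_prime_eq_card_fixed_points[OF assms(1,2)])
    show "rcosets center \<subseteq> ?E" using r_coset_subset_G[OF Z(2)] by (auto simp: RCOSETS_def)
    show "finite (rcosets center)" using fin by (simp add: RCOSETS_def)
    show "?\<phi> g S \<in> rcosets center" if "g \<in> carrier G" "S \<in> rcosets center" for g S
    proof -
      have "S \<subseteq> carrier G" using that(2) r_coset_subset_G[OF Z(2)] by (auto simp: RCOSETS_def)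
      then show ?thesis using conj_rcosets_center[OF that] by simp
    qed
  qed
  then have "p dvd card Fix"
    using prime_dvd_card_rcosets_center[OF assms] by (simp add: mod_eq_0_iff_dvd[symmetric])
  moreover have "center \<in> Fix"
  proof -
    have "center #> \<one> \<in> rcosets center" by (auto simp: RCOSETS_def)
    moreover have "?\<phi> g center = center" if "g \<in> carrier G" for g
      using \<phi>_coset[OF one_closed that] that Z(2) by simp
    ultimately show ?thesis using Z(2) by (simp add: Fix_def)
  qed
  moreover have "\<not> p dvd 1" using prime_gt_1_nat[OF assms(1)] by simp
  ultimately have "Fix \<noteq> {center}" by auto
  then obtain S where S: "S \<in> Fix" "S \<noteq> center" using \<open>center \<in> Fix\<close> by blast
  then obtain a where a: "a \<in> carrier G" "S = center #> a" by (auto simp: Fix_def RCOSETS_def)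
  have "a \<notin> center" using S a coset_join2[OF a(1) Z(1)] by auto
  moreover have "g \<otimes> a \<otimes> inv g \<in> center #> a" if g: "g \<in> carrier G" for g
  proof -
    have "center #> (g \<otimes> a \<otimes> inv g) = center #> a"
      using S a g \<phi>_coset by (simp add: Fix_def)
    then show ?thesis using rcos_self[OF _ Z(1), of "g \<otimes> a \<otimes> inv g"] a g by simp
  qed
  ultimately show ?thesis using a by blast
qed

lemma exists_central_commutator:
  assumes "Factorial_Ring.prime p" "order G = p ^ n" "\<not> comm_group G"
  shows "\<exists>a\<in>carrier G. \<exists>b\<in>carrier G. \<exists>c\<in>center. c \<noteq> \<one> \<and> a \<otimes> b = b \<otimes> a \<otimes> c"
proof -
  obtain a where a: "a \<in> carrier G" "a \<notin> center" and conj: "\<And>g. g \<in> carrier G \<Longrightarrow> g \<otimes> a \<otimes> inv g \<in> center #> a"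
    using exists_noncentral_central_modulo_center[OF assms] by blast
  obtain b where b: "b \<in> carrier G" "a \<otimes> b \<noteq> b \<otimes> a" using a by (auto simp: center_def)
  have "inv b \<otimes> a \<otimes> b \<in> center #> a" using conj[of "inv b"] b by simp
  then obtain z where z: "z \<in> center" "inv b \<otimes> a \<otimes> b = z \<otimes> a" by (auto simp: r_coset_def)
  have "a \<otimes> b = b \<otimes> (inv b \<otimes> a \<otimes> b)" using a b by (simp add: m_assoc[symmetric])
  also have "\<dots> = b \<otimes> a \<otimes> z"
    using z a b center_closed[OF z(1)] center_commute[OF z(1) a(1)] by (simp add: m_assoc)
  finally have "a \<otimes> b = b \<otimes> a \<otimes> z" .
  moreover have "z \<noteq> \<one>" using calculation a b by auto
  ultimately show ?thesis using a b z by blast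
qed

end

section \<open>Embedding the Heisenberg group\<close>

lemma Heis_mult:
  "(a, b, c) \<otimes>\<^bsub>Heis p\<^esub> (a', b', c') = ((a + a') mod p, (b + b') mod p, (c + c' + a * b') mod p)"
  by (simp add: Heis_def)

lemma Heis_mult_assoc:
  "(x \<otimes>\<^bsub>Heis p\<^esub> y) \<otimes>\<^bsub>Heis p\<^esub> z = x \<otimes>\<^bsub>Heis p\<^esub> (y \<otimes>\<^bsub>Heis p\<^esub> z)"
proof -
  obtain a b c a' b' c' a'' b'' c'' where "x = (a, b, c)" "y = (a', b', c')" "z = (a'', b'', c'')"
    by (cases x, cases y, cases z) auto
  moreover have "((c + c' + a * b') mod p + c'' + (a + a') mod p * b'') mod p
      = ((c + c' + a * b') + c'' + (a + a') * b'') mod p"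
    and "(c + (c' + c'' + a' * b'') mod p + a * ((b' + b'') mod p)) mod p
      = (c + (c' + c'' + a' * b'') + a * (b' + b'')) mod p"
    by (intro mod_add_cong mod_mult_cong; simp)+
  ultimately show ?thesis
    by (simp add: Heis_mult mod_add_left_eq mod_add_right_eq algebra_simps)
qed

lemma group_Heis:
  assumes "0 < p"
  shows "group (Heis p)"
proof (rule groupI)
  fix x y z
  show "x \<otimes>\<^bsub>Heis p\<^esub> y \<otimes>\<^bsub>Heis p\<^esub> z = x \<otimes>\<^bsub>Heis p\<^esub> (y \<otimes>\<^bsub>Heis p\<^esub> z)"
    by (rule Heis_mult_assoc)
next
  have neg: "((p - n mod p) mod p + n) mod p = 0" for n
  proof -
    have "((p - n mod p) mod p + n) mod p = (p - n mod p + n mod p) mod p"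
      by (simp add: mod_add_left_eq mod_add_right_eq)
    also have "\<dots> = 0" using assms by (simp add: less_imp_le)
    finally show ?thesis .
  qed
  fix x assume "x \<in> carrier (Heis p)"
  then obtain a b c where x: "x = (a, b, c)" "a < p" "b < p" by (auto simp: Heis_def)
  define y where "y = ((p - a) mod p, (p - b) mod p, (p - (c + (p - a) mod p * b) mod p) mod p)"
  have "y \<otimes>\<^bsub>Heis p\<^esub> x = (0, 0, 0)"
    using neg[of a] neg[of b] neg[of "c + (p - a) mod p * b"] x
    by (simp add: y_def Heis_mult add.assoc)
  moreover have "y \<in> carrier (Heis p)"
    using assms by (simp add: y_def Heis_def)
  ultimately show "\<exists>y\<in>carrier (Heis p). y \<otimes>\<^bsub>Heis p\<^esub> x = \<one>\<^bsub>Heis p\<^esub>"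
    by (auto simp: Heis_def)
qed (use assms in \<open>auto simp: Heis_def\<close>)

lemma (in group_hom) iso_img_if_inj:
  assumes "inj_on h (carrier G)"
  shows "H\<lparr>carrier := h ` carrier G\<rparr> \<cong> G"
proof -
  have "h \<in> iso G (H\<lparr>carrier := h ` carrier G\<rparr>)"
    using assms by (auto simp: iso_def hom_def bij_betw_def)
  then show ?thesis by (rule G.iso_sym[OF is_isoI])
qed

context group begin

lemma mult_pow_swap_central:
  assumes "a \<in> carrier G" "b \<in> carrier G" "c \<in> center" "a \<otimes> b = b \<otimes> a \<otimes> c"
  shows "a \<otimes> b [^] (j::nat) = b [^] j \<otimes> a \<otimes> c [^] j"
proof (induction j)
  case (Suc j)
  have c: "c \<in> carrier G" "\<And>g. g \<in> carrier G \<Longrightarrow> c [^] j \<otimes> g = g \<otimes> c [^] j"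
    using assms(3) pow_mem_center[OF assms(3)] by (auto simp: center_closed center_commute)
  have "a \<otimes> b [^] Suc j = (a \<otimes> b [^] j) \<otimes> b"
    using assms(1,2) by (simp add: m_assoc)
  also have "\<dots> = b [^] j \<otimes> a \<otimes> (c [^] j \<otimes> b)"
    using Suc assms(1,2) c(1) by (simp add: m_assoc)
  also have "\<dots> = b [^] j \<otimes> (a \<otimes> b) \<otimes> c [^] j"
    using assms(1,2) c by (simp add: m_assoc)
  also have "\<dots> = b [^] Suc j \<otimes> a \<otimes> c [^] Suc j"
    using assms c(1) c(2)[OF c(1)] by (simp add: m_assoc)
  finally show ?case .
qed (use assms in simp)

lemma pow_mult_pow_swap_central:
  assumes "a \<in> carrier G" "b \<in> carrier G" "c \<in> center" "a \<otimes> b = b \<otimes> a \<otimes> c"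
  shows "a [^] (i::nat) \<otimes> b [^] (j::nat) = b [^] j \<otimes> a [^] i \<otimes> c [^] (i * j)"
proof (induction i)
  case (Suc i)
  have c: "c [^] n \<in> carrier G" "\<And>g. g \<in> carrier G \<Longrightarrow> c [^] n \<otimes> g = g \<otimes> c [^] n" for n :: nat
    using pow_mem_center[OF assms(3), of n] by (auto simp: center_closed center_commute)
  have "a [^] Suc i \<otimes> b [^] j = a [^] i \<otimes> (a \<otimes> b [^] j)"
    using assms(1,2) by (simp add: m_assoc)
  also have "\<dots> = (a [^] i \<otimes> b [^] j) \<otimes> a \<otimes> c [^] j"
    using assms(1,2) c(1) by (simp add: mult_pow_swap_central[OF assms] m_assoc)
  also have "\<dots> = b [^] j \<otimes> a [^] i \<otimes> (c [^] (i * j) \<otimes> a) \<otimes> c [^] j"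
    using Suc assms(1,2) c(1) by (simp add: m_assoc)
  also have "\<dots> = b [^] j \<otimes> a [^] Suc i \<otimes> c [^] (Suc i * j)"
    using assms(1,2) center_closed[OF assms(3)] c(2)[OF assms(1), of "i * j"]
    by (simp add: m_assoc nat_pow_mult add.commute)
  finally show ?case .
qed (use assms in simp)

lemma Heis_word_mult:
  assumes "a \<in> carrier G" "b \<in> carrier G" "c \<in> center" "a \<otimes> b = b \<otimes> a \<otimes> c"
  shows "(b [^] j \<otimes> a [^] i \<otimes> c [^] k) \<otimes> (b [^] j' \<otimes> a [^] i' \<otimes> c [^] k')
    = b [^] (j + j') \<otimes> a [^] (i + i') \<otimes> c [^] (k + k' + i * j' :: nat)"
proof -
  have c: "c [^] n \<in> carrier G" "\<And>g. g \<in> carrier G \<Longrightarrow> c [^] n \<otimes> g = g \<otimes> c [^] n" for n :: nat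
    using pow_mem_center[OF assms(3), of n] by (auto simp: center_closed center_commute)
  have "(b [^] j \<otimes> a [^] i \<otimes> c [^] k) \<otimes> (b [^] j' \<otimes> a [^] i' \<otimes> c [^] k')
      = (b [^] j \<otimes> a [^] i) \<otimes> (c [^] k \<otimes> (b [^] j' \<otimes> a [^] i')) \<otimes> c [^] k'"
    using assms(1,2) c(1) by (simp add: m_assoc)
  also have "\<dots> = b [^] j \<otimes> (a [^] i \<otimes> b [^] j') \<otimes> a [^] i' \<otimes> (c [^] k \<otimes> c [^] k')"
    using assms(1,2) c(1) c(2)[of "b [^] j' \<otimes> a [^] i'" k] by (simp add: m_assoc)
  also have "\<dots> = b [^] j \<otimes> b [^] j' \<otimes> (a [^] i \<otimes> a [^] i') \<otimes> (c [^] (i * j') \<otimes> (c [^] k \<otimes> c [^] k'))"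
    using assms(1,2) c(1) c(2)[of "a [^] i'" "i * j'"]
    by (simp add: pow_mult_pow_swap_central[OF assms] m_assoc)
  also have "\<dots> = b [^] (j + j') \<otimes> a [^] (i + i') \<otimes> c [^] (k + k' + i * j')"
    using assms(1,2) center_closed[OF assms(3)] by (simp add: nat_pow_mult add.commute add.left_commute)
  finally show ?thesis .
qed

lemma Heis_hom:
  assumes "a \<in> carrier G" "b \<in> carrier G" "c \<in> center" "a \<otimes> b = b \<otimes> a \<otimes> c"
    and "a [^] p = \<one>" "b [^] p = \<one>" "c [^] p = \<one>"
  shows "(\<lambda>(i, j, k). b [^] j \<otimes> a [^] i \<otimes> c [^] k) \<in> hom (Heis p) G"
proof (rule homI)
  fix s t assume "s \<in> carrier (Heis p)" "t \<in> carrier (Heis p)"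
  obtain i j k i' j' k' where st: "s = (i, j, k)" "t = (i', j', k')"
    by (cases s, cases t) auto
  have "c \<in> carrier G" using assms(3) by (rule center_closed)
  then have "b [^] ((j + j') mod p) \<otimes> a [^] ((i + i') mod p) \<otimes> c [^] ((k + k' + i * j') mod p)
      = b [^] (j + j') \<otimes> a [^] (i + i') \<otimes> c [^] (k + k' + i * j')"
    using pow_mod_eq_pow[OF assms(1,5)] pow_mod_eq_pow[OF assms(2,6)] pow_mod_eq_pow[OF _ assms(7)] by simp
  also have "\<dots> = (b [^] j \<otimes> a [^] i \<otimes> c [^] k) \<otimes> (b [^] j' \<otimes> a [^] i' \<otimes> c [^] k')"
    by (rule Heis_word_mult[OF assms(1-4), symmetric])
  finally
  show "(case s \<otimes>\<^bsub>Heis p\<^esub> t of (i, j, k) \<Rightarrow> b [^] j \<otimes> a [^] i \<otimes> c [^] k) =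
      (case s of (i, j, k) \<Rightarrow> b [^] j \<otimes> a [^] i \<otimes> c [^] k) \<otimes> (case t of (i, j, k) \<Rightarrow> b [^] j \<otimes> a [^] i \<otimes> c [^] k)"
    by (simp add: st Heis_mult)
qed (use assms(1,2) center_closed[OF assms(3)] in \<open>auto split: prod.splits\<close>)

lemma Heis_word_eq_one:
  assumes "a \<in> carrier G" "b \<in> carrier G" "c \<in> center" "a \<otimes> b = b \<otimes> a \<otimes> c"
    and "i < ord c" "j < ord c" "k < ord c" and "b [^] j \<otimes> a [^] i \<otimes> c [^] k = \<one>"
  shows "i = 0 \<and> j = 0 \<and> k = 0"
proof -
  have c: "c \<in> carrier G" using assms(3) by (rule center_closed)
  have cancel: "c [^] n = \<one>" if "w \<in> carrier G" "w \<otimes> c [^] (m + n) = w \<otimes> c [^] m" for w and m n :: nat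
    using that c by (simp add: nat_pow_mult[symmetric] m_assoc[symmetric] del: nat_pow_mult)
  let ?x = "b [^] j \<otimes> a [^] i \<otimes> c [^] k"
  \<comment> \<open>As ?x = 1 commutes with a and with b, the exponents j and i resurface as powers of c.\<close>
  have "a \<otimes> ?x = ?x \<otimes> a" "b \<otimes> ?x = ?x \<otimes> b"
    using assms(1,2,8) by simp_all
  moreover have "a \<otimes> ?x = b [^] j \<otimes> a [^] Suc i \<otimes> c [^] (k + j)"
    using Heis_word_mult[OF assms(1-4), of 0 1 0 j i k] assms(1,2) c by simp
  moreover have "?x \<otimes> a = b [^] j \<otimes> a [^] Suc i \<otimes> c [^] k"
    using Heis_word_mult[OF assms(1-4), of j i k 0 1 0] assms(1,2) c by simp
  moreover have "b \<otimes> ?x = b [^] Suc j \<otimes> a [^] i \<otimes> c [^] k"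
    using Heis_word_mult[OF assms(1-4), of 1 0 0 j i k] assms(1,2) c by simp
  moreover have "?x \<otimes> b = b [^] Suc j \<otimes> a [^] i \<otimes> c [^] (k + i)"
    using Heis_word_mult[OF assms(1-4), of j i k 1 0 0] assms(1,2) c by simp
  ultimately have "c [^] j = \<one>" "c [^] i = \<one>"
    using cancel assms(1,2) by (metis m_closed nat_pow_closed)+
  then have "j = 0" "i = 0"
    using eq_zero_if_pow_eq_one_less_ord c assms(5,6) by blast+
  then have "c [^] k = \<one>" using assms(8) c by simp
  then show ?thesis using \<open>j = 0\<close> \<open>i = 0\<close> eq_zero_if_pow_eq_one_less_ord c assms(7) by blast
qed

lemma exists_subgroup_iso_Heis:
  assumes "Factorial_Ring.prime p" "\<forall>x\<in>carrier G. x [^] p = \<one>"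
    and "a \<in> carrier G" "b \<in> carrier G" "c \<in> center" "c \<noteq> \<one>" "a \<otimes> b = b \<otimes> a \<otimes> c"
  shows "\<exists>H. subgroup H G \<and> G\<lparr>carrier := H\<rparr> \<cong> Heis p"
proof -
  let ?F = "\<lambda>(i, j, k). b [^] j \<otimes> a [^] i \<otimes> c [^] k"
  have c: "c \<in> carrier G" using assms(5) by (rule center_closed)
  have ord_c: "ord c = p" using ord_eq_prime[OF c assms(6)] assms(1,2) c by blast
  interpret F: group_hom "Heis p" G ?F
    using group_Heis[OF prime_gt_0_nat[OF assms(1)]] Heis_hom[OF assms(3-5,7)] assms(2-4) c
    by (simp add: group_hom_def group_hom_axioms_def is_group)
  have "inj_on ?F (carrier (Heis p))"
    unfolding F.inj_on_one_iff
    using Heis_word_eq_one[OF assms(3,4,5,7)] ord_c by (auto simp: Heis_def)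
  then show ?thesis using F.img_is_subgroup F.iso_img_if_inj by blast
qed

lemma group_exponent_eq_prime_iff_classification:
  assumes "finite (carrier G)" "Factorial_Ring.prime p"
  shows "group_exponent G = p \<longleftrightarrow>
    (cyclic_group G \<and> order G = p) \<or> elementary_abelian p G
    \<or> ((\<exists>H. subgroup H G \<and> G\<lparr>carrier := H\<rparr> \<cong> Heis p) \<and> group_exponent G = p)"
    (is "_ \<longleftrightarrow> ?cyclic \<or> ?elementary \<or> ?Heis")
proof
  assume exp: "group_exponent G = p"
  then have pow_p: "\<forall>x\<in>carrier G. x [^] p = \<one>" using group_exponent_eq_prime_iff[OF assms] by blast
  show "?cyclic \<or> ?elementary \<or> ?Heis"
  proof (cases "comm_group G")
    case True
    then have ?elementary using comm_group.elementary_abelian_iff_group_exponent[OF True assms] exp by blast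
    then show ?thesis by blast
  next
    case False
    obtain n where "order G = p ^ n" using order_eq_prime_power[OF assms pow_p] by blast
    then obtain a b c where "a \<in> carrier G" "b \<in> carrier G" "c \<in> center" "c \<noteq> \<one>" "a \<otimes> b = b \<otimes> a \<otimes> c"
      using exists_central_commutator[OF assms(2) _ False] by blast
    then have ?Heis using exists_subgroup_iso_Heis[OF assms(2) pow_p] exp by blast
    then show ?thesis by blast
  qed
next
  assume "?cyclic \<or> ?elementary \<or> ?Heis"
  then consider ?cyclic | ?elementary | ?Heis by blast
  then show "group_exponent G = p"
  proof cases
    case 1
    then show ?thesis using group_exponent_prime_order assms(2) by simp
  next
    case 2
    then have "comm_group G" by (simp add: elementary_abelian_def)
    then show ?thesis using comm_group.elementary_abelian_iff_group_exponent[OF _ assms] 2 by blast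
  qed simp
qed

end

section \<open>The poset of spectra\<close>

lemma pi_class_eq_iff:
  assumes "H \<in> subgroups G" "K \<in> subgroups G"
  shows "pi_class G H = pi_class G K \<longleftrightarrow> pi_e G H = pi_e G K"
proof
  assume "pi_class G H = pi_class G K"
  moreover have "H \<in> pi_class G H" using assms(1) by (simp add: pi_class_def pi_equiv_def)
  ultimately show "pi_e G H = pi_e G K" by (simp add: pi_class_def pi_equiv_def)
qed (simp add: pi_class_def pi_equiv_def)

lemma PiTilde_le_pi_class_iff:
  assumes "H \<in> subgroups G" "K \<in> subgroups G"
  shows "PiTilde_le G (pi_class G H) (pi_class G K) \<longleftrightarrow> pi_e G H \<subseteq> pi_e G K"
  unfolding PiTilde_le_def using pi_class_eq_iff assms by metis

context group begin

lemma trivial_mem_subgroups: "{\<one>} \<in> subgroups G"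
  by (simp add: subgroups_def triv_subgroup)

lemma carrier_mem_subgroups: "carrier G \<in> subgroups G"
  by (simp add: subgroups_def subgroup_self)

lemma one_mem_pi_e: "H \<in> subgroups G \<Longrightarrow> 1 \<in> pi_e G H"
  unfolding pi_e_def subgroups_def using subgroup.one_closed ord_id by force

lemma pi_e_eq_one_iff:
  assumes "H \<in> subgroups G"
  shows "pi_e G H = {1} \<longleftrightarrow> H = {\<one>}"
proof -
  have H: "subgroup H G" using assms by (simp add: subgroups_def)
  have "pi_e G H = {1} \<longleftrightarrow> (\<forall>x\<in>H. ord x = 1)"
    using one_mem_pi_e[OF assms] by (auto simp: pi_e_def)
  also have "\<dots> \<longleftrightarrow> H = {\<one>}"
    using ord_eq_1 subgroup.mem_carrier[OF H] subgroup.one_closed[OF H] by auto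
  finally show ?thesis .
qed

lemma pi_class_eq_trivial_iff:
  "H \<in> subgroups G \<Longrightarrow> pi_class G H = pi_class G {\<one>} \<longleftrightarrow> H = {\<one>}"
  using pi_class_eq_iff[OF _ trivial_mem_subgroups] pi_e_eq_one_iff trivial_mem_subgroups by metis

lemma PiTilde_eq_if_card_eq_2:
  assumes "card (PiTilde G) = 2"
  obtains H where "H \<in> subgroups G" "H \<noteq> {\<one>}" "PiTilde G = {pi_class G {\<one>}, pi_class G H}"
proof -
  have "pi_class G {\<one>} \<in> PiTilde G" using trivial_mem_subgroups by (simp add: PiTilde_def)
  moreover obtain A where "A \<in> PiTilde G" "A \<noteq> pi_class G {\<one>}"
    using assms by (metis card_1_singletonE card_2_iff insertI1 insert_commute numeral_le_one_iff)
  moreover obtain H where H: "H \<in> subgroups G" "A = pi_class G H"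
    using calculation(2) by (auto simp: PiTilde_def)
  ultimately have "PiTilde G = {pi_class G {\<one>}, pi_class G H}"
    using assms by (intro card_subset_eq[symmetric]) (auto intro: card_ge_0_finite)
  then show thesis using that H \<open>A \<noteq> _\<close> pi_class_eq_trivial_iff by blast
qed

lemma ord_dvd_if_mem_generate:
  assumes "x \<in> carrier G" "z \<in> generate G {x}"
  shows "ord z dvd ord x"
proof -
  obtain k :: int where z: "z = x [^] k" using assms generate_pow by auto
  have "z [^] ord x = x [^] (k * int (ord x))"
    using assms(1) by (simp add: z int_pow_pow flip: int_pow_int)
  also have "\<dots> = \<one>" using int_pow_eq_id[OF assms(1)] by simp
  finally show ?thesis using pow_eq_id assms(1) z by simp
qed

lemma prime_ord_if_nontrivial_ords_eq:
  assumes "finite (carrier G)" "x \<in> carrier G" "x \<noteq> \<one>"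
    and "\<And>y. y \<in> carrier G \<Longrightarrow> y \<noteq> \<one> \<Longrightarrow> ord y = ord x"
  shows "Factorial_Ring.prime (ord x)"
proof -
  have "ord x \<noteq> 1" using ord_eq_1 assms(2,3) by simp
  then obtain q where q: "Factorial_Ring.prime q" "q dvd ord x" using prime_factor_nat by blast
  then obtain m where m: "ord x = q * m" by (elim dvdE)
  have "m \<noteq> 0" using m ord_ge_1[OF assms(1,2)] by auto
  then have "ord (x [^] m) = q" using ord_pow[OF assms(2)] m by simp
  moreover have "x [^] m \<noteq> \<one>" using calculation q(1) by auto
  ultimately show ?thesis using assms(2,4) q(1) by force
qed

lemma PiTilde_iso_C2_iff_card_eq_2: "PiTilde_iso_C2 G \<longleftrightarrow> card (PiTilde G) = 2"
proof
  assume "PiTilde_iso_C2 G"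
  then obtain f where "bij_betw f (PiTilde G) (UNIV :: bool set)"
    unfolding PiTilde_iso_C2_def by blast
  then show "card (PiTilde G) = 2" using bij_betw_same_card by fastforce
next
  assume "card (PiTilde G) = 2"
  then obtain H\<^sub>0 where H\<^sub>0: "H\<^sub>0 \<in> subgroups G" "H\<^sub>0 \<noteq> {\<one>}"
    and classes: "PiTilde G = {pi_class G {\<one>}, pi_class G H\<^sub>0}"
    by (rule PiTilde_eq_if_card_eq_2)
  define f where "f = (\<lambda>A. A \<noteq> pi_class G {\<one>})"
  have "bij_betw f (PiTilde G) (UNIV :: bool set)"
    using pi_class_eq_trivial_iff[OF H\<^sub>0(1)] H\<^sub>0(2)
    by (auto simp: classes f_def bij_betw_def inj_on_def image_iff)
  moreover have "PiTilde_le G A B \<longleftrightarrow> f A \<le> f B" if AB: "A \<in> PiTilde G" "B \<in> PiTilde G" for A B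
  proof -
    obtain H K where HK: "H \<in> subgroups G" "K \<in> subgroups G" "A = pi_class G H" "B = pi_class G K"
      using AB by (auto simp: PiTilde_def)
    have fA: "f A \<longleftrightarrow> H \<noteq> {\<one>}" and fB: "f B \<longleftrightarrow> K \<noteq> {\<one>}"
      using pi_class_eq_trivial_iff HK by (simp_all add: f_def)
    have "pi_e G H \<subseteq> pi_e G K \<longleftrightarrow> (H \<noteq> {\<one>} \<longrightarrow> K \<noteq> {\<one>})"
    proof (cases "H = {\<one>}")
      case True
      then show ?thesis using pi_e_eq_one_iff[OF HK(1)] one_mem_pi_e[OF HK(2)] by simp
    next
      case H: False
      show ?thesis
      proof (cases "K = {\<one>}")
        case True
        then show ?thesis
          using H pi_e_eq_one_iff[OF HK(1)] pi_e_eq_one_iff[OF HK(2)] one_mem_pi_e[OF HK(1)] by auto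
      next
        case False
        then have "A = B" using H fA fB AB by (auto simp: classes f_def)
        then show ?thesis using pi_class_eq_iff[OF HK(1,2)] HK False by simp
      qed
    qed
    then show ?thesis
      using PiTilde_le_pi_class_iff[OF HK(1,2)] fA fB HK by (simp add: le_bool_def)
  qed
  ultimately show "PiTilde_iso_C2 G" unfolding PiTilde_iso_C2_def by blast
qed

lemma card_PiTilde_eq_2_if_group_exponent_prime:
  assumes "finite (carrier G)" "Factorial_Ring.prime p" "group_exponent G = p"
  shows "card (PiTilde G) = 2"
proof -
  have nontrivial: "carrier G \<noteq> {\<one>}" and pow_p: "\<forall>x\<in>carrier G. x [^] p = \<one>"
    using group_exponent_eq_prime_iff[OF assms(1,2)] assms(3) by auto
  have spectrum: "pi_e G H = {1, p}" if H: "H \<in> subgroups G" "H \<noteq> {\<one>}" for H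
  proof -
    have "ord y \<in> {1, p}" if "y \<in> H" for y
    proof (cases "y = \<one>")
      case False
      moreover have "y \<in> carrier G" using H that by (simp add: subgroups_def subgroup.mem_carrier)
      ultimately show ?thesis using ord_eq_prime pow_p assms(2) by blast
    qed simp
    then have "pi_e G H \<subseteq> {1, p}" by (auto simp: pi_e_def)
    then show ?thesis using one_mem_pi_e[OF H(1)] pi_e_eq_one_iff[OF H(1)] H(2) by auto
  qed
  have "pi_class G H \<in> {pi_class G {\<one>}, pi_class G (carrier G)}" if H: "H \<in> subgroups G" for H
    using spectrum[OF H] spectrum[OF carrier_mem_subgroups nontrivial] pi_class_eq_trivial_iff[OF H]
      pi_class_eq_iff[OF H carrier_mem_subgroups] by blast
  then have "PiTilde G = {pi_class G {\<one>}, pi_class G (carrier G)}"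
    using trivial_mem_subgroups carrier_mem_subgroups unfolding PiTilde_def by blast
  moreover have "pi_class G (carrier G) \<noteq> pi_class G {\<one>}"
    using pi_class_eq_trivial_iff[OF carrier_mem_subgroups] nontrivial by simp
  ultimately show ?thesis by simp
qed

lemma group_exponent_prime_if_card_PiTilde_eq_2:
  assumes "finite (carrier G)" "card (PiTilde G) = 2"
  shows "\<exists>p. Factorial_Ring.prime p \<and> group_exponent G = p"
proof -
  obtain H\<^sub>0 where H\<^sub>0: "H\<^sub>0 \<in> subgroups G" "H\<^sub>0 \<noteq> {\<one>}"
    and classes: "PiTilde G = {pi_class G {\<one>}, pi_class G H\<^sub>0}"
    using PiTilde_eq_if_card_eq_2[OF assms(2)] by blast
  have generate: "generate G {y} \<in> subgroups G" "generate G {y} \<noteq> {\<one>}"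
    if "y \<in> carrier G" "y \<noteq> \<one>" for y
    using that generate_is_subgroup generate.incl[of y "{y}" G] by (auto simp: subgroups_def)
  have same_spectrum: "pi_e G (generate G {y}) = pi_e G H\<^sub>0" if y: "y \<in> carrier G" "y \<noteq> \<one>" for y
  proof -
    have "pi_class G (generate G {y}) \<in> PiTilde G" using generate(1)[OF y] by (simp add: PiTilde_def)
    moreover have "pi_class G (generate G {y}) \<noteq> pi_class G {\<one>}"
      using pi_class_eq_trivial_iff generate[OF y] by simp
    ultimately have "pi_class G (generate G {y}) = pi_class G H\<^sub>0" using classes by simp
    then show ?thesis using pi_class_eq_iff[OF generate(1)[OF y] H\<^sub>0(1)] by simp
  qed
  have ord_dvd: "ord y dvd ord x"
    if x: "x \<in> carrier G" "x \<noteq> \<one>" and y: "y \<in> carrier G" "y \<noteq> \<one>" for x y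
  proof -
    have "ord y \<in> pi_e G (generate G {y})" using generate.incl[of y "{y}" G] by (auto simp: pi_e_def)
    then have "ord y \<in> pi_e G (generate G {x})" using same_spectrum x y by simp
    then obtain z where "z \<in> generate G {x}" "ord y = ord z" by (auto simp: pi_e_def)
    then show ?thesis using ord_dvd_if_mem_generate[OF x(1)] by simp
  qed
  have "H\<^sub>0 \<subseteq> carrier G" "\<one> \<in> H\<^sub>0"
    using H\<^sub>0(1) subgroup.subset subgroup.one_closed by (auto simp: subgroups_def)
  then obtain x where x: "x \<in> carrier G" "x \<noteq> \<one>" using H\<^sub>0(2) by blast
  have ord_eq: "ord y = ord x" if "y \<in> carrier G" "y \<noteq> \<one>" for y
    using ord_dvd x that by (simp add: dvd_antisym)
  have "Factorial_Ring.prime (ord x)"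
    using prime_ord_if_nontrivial_ords_eq[OF assms(1) x] ord_eq by blast
  moreover have "\<forall>y\<in>carrier G. y [^] ord x = \<one>" using ord_eq by (metis nat_pow_one pow_ord_eq_1)
  ultimately have "group_exponent G = ord x"
    using group_exponent_eq_prime_iff[OF assms(1)] x by blast
  then show ?thesis using \<open>Factorial_Ring.prime (ord x)\<close> by blast
qed

end

theorem theorem2p2:
  fixes G :: "('a, 'b) monoid_scheme"
  assumes "group G" and "finite (carrier G)"
  shows "PiTilde_iso_C2 G \<longleftrightarrow>
    (\<exists>p::nat. Factorial_Ring.prime p \<and>
       ((cyclic_group G \<and> order G = p)
        \<or> elementary_abelian p G
        \<or> ((\<exists>H. subgroup H G \<and> G\<lparr>carrier := H\<rparr> \<cong> Heis p) \<and> group_exponent G = p)))"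
proof -
  interpret group G by fact
  have "PiTilde_iso_C2 G \<longleftrightarrow> (\<exists>p. Factorial_Ring.prime p \<and> group_exponent G = p)"
    using PiTilde_iso_C2_iff_card_eq_2 card_PiTilde_eq_2_if_group_exponent_prime[OF assms(2)]
      group_exponent_prime_if_card_PiTilde_eq_2[OF assms(2)] by blast
  then show ?thesis
    using group_exponent_eq_prime_iff_classification[OF assms(2)] by blast
qed

end
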